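(* For every positive integer $n$, $$S(n+4) \geq 111\,S(n) + 43.$$
   Context: A set $A \subseteq \mathbb{N}$ is sum-free if for all $(a,b)\in A^2$ (allowing $a=b$), $a+b \notin A$. For $n\ge 1$, the Schur number $S(n)$ is the largest integer $p$ such that $\{1,\dots,p\}$ can be partitioned into $n$ sum-free subsets. *)

theory Defs
  imports Main
begin

definition sum_free :: "nat set \<Rightarrow> bool" where
  "sum_free A \<longleftrightarrow> (\<forall>a\<in>A. \<forall>b\<in>A. a + b \<notin> A)"

text \<open>Parts may be empty (the empty set is sum-free, so this does not change S(n)).\<close>
definition schur_partitionable :: "nat \<Rightarrow> nat \<Rightarrow> bool" where
  "schur_partitionable n p \<longleftrightarrow>
     (\<exists>P :: nat \<Rightarrow> nat set.
        (\<Union>i<n. P i) = {1..p} \<and>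
        (\<forall>i<n. \<forall>j<n. i \<noteq> j \<longrightarrow> P i \<inter> P j = {}) \<and>
        (\<forall>i<n. sum_free (P i)))"

definition schur_number :: "nat \<Rightarrow> nat" where
  "schur_number n = (GREATEST p. schur_partitionable n p)"

end

(*
  Write x + 67 = 111 q + e with e < 111 and split the residues into an
  inherited class E, contained in [0, 67], and four further classes.  A number whose residue lies
  in E goes to the part of q in a given sum-free partition of {1..p} into n parts; any other number
  goes to one of four new parts according to the class of its residue.  A sum x + x' = x'' reads
  e + e' + 44 = e'' (mod 111), so the new parts are sum-free when the four classes are sum-free for
  this shifted addition.  For residues in E the window forces either q'' = q + q', which the old
  partition excludes, or a carry e'' = e + e' + 44, which the template excludes.  Exactly the
  numbers 1, ..., 111 p + 43 are covered.

  That S(n) is attained, i.e. that partitionable lengths are bounded, is Schur's theorem, which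
  follows from Ramsey's theorem.
*)

theory Submission
  imports Defs "HOL-Library.Ramsey"
begin

lemma sum_free_subset: "sum_free B \<Longrightarrow> A \<subseteq> B \<Longrightarrow> sum_free A"
  unfolding sum_free_def by blast

lemma schur_partitionable_0: "schur_partitionable n 0"
  unfolding schur_partitionable_def sum_free_def by (rule exI[of _ "\<lambda>_. {}"]) auto

lemma schur_partitionable_if_covered:
  assumes cover: "{1..p} \<subseteq> (\<Union>i<n. A i)" and free: "\<And>i. i < n \<Longrightarrow> sum_free (A i)"
  shows "schur_partitionable n p"
proof -
  define P where "P i = A i \<inter> {1..p} - (\<Union>j<i. A j)" for i
  have "(\<Union>i<n. P i) = {1..p}"
  proof
    show "{1..p} \<subseteq> (\<Union>i<n. P i)"
    proof
      fix x assume x: "x \<in> {1..p}"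
      have "\<exists>i. i < n \<and> x \<in> A i" using cover x by blast
      then obtain i where "i < n" "x \<in> A i" and "\<And>j. j < i \<Longrightarrow> x \<notin> A j"
        unfolding exists_least_iff[of "\<lambda>i. i < n \<and> x \<in> A i"] by (meson less_trans)
      then show "x \<in> (\<Union>i<n. P i)" using x unfolding P_def by blast
    qed
  qed (auto simp: P_def)
  moreover have "P i \<inter> P j = {}" if "i \<noteq> j" for i j
    using that unfolding P_def by (cases i j rule: linorder_cases) auto
  moreover have "sum_free (P i)" if "i < n" for i
    using free[OF that] by (rule sum_free_subset) (auto simp: P_def)
  ultimately show ?thesis unfolding schur_partitionable_def by blast
qed

text \<open>Schur's theorem: colour the pair \<open>{x, y}\<close> by the part containing \<open>|y - x|\<close>;
  a monochromatic triangle \<open>x < y < z\<close> gives \<open>(y - x) + (z - y) = z - x\<close> inside one part.\<close>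
lemma schur_partitionable_bounded: "\<exists>N. \<forall>p. schur_partitionable n p \<longrightarrow> p < N"
proof -
  obtain N :: nat where ramsey: "partn_lst {..<N} (replicate n 3) 2"
    using ramsey_full by blast
  have "p < N" if "schur_partitionable n p" for p
  proof (rule ccontr)
    assume "\<not> p < N"
    from that obtain P where cover: "(\<Union>i<n. P i) = {1..p}" and free: "\<forall>i<n. sum_free (P i)"
      unfolding schur_partitionable_def by blast
    define colour where "colour d = (SOME i. i < n \<and> d \<in> P i)" for d
    have colour: "colour d < n \<and> d \<in> P (colour d)" if "d \<in> {1..p}" for d
      using someI_ex[of "\<lambda>i. i < n \<and> d \<in> P i"] cover that unfolding colour_def by blast
    define f where "f e = colour (Max e - Min e)" for e :: "nat set"
    have "f \<in> [{..<N}]\<^bsup>2\<^esup> \<rightarrow> {..<n}"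
    proof
      fix e assume "e \<in> [{..<N}]\<^bsup>2\<^esup>"
      then obtain x y where "e = {x, y}" "x < y" "y < N"
        by (auto simp: ordered_nsets_2_eq)
      moreover have "y - x \<in> {1..p}" using \<open>x < y\<close> \<open>y < N\<close> \<open>\<not> p < N\<close> by auto
      ultimately show "f e \<in> {..<n}" using colour by (simp add: f_def)
    qed
    then obtain i H where "i < n" "H \<in> [{..<N}]\<^bsup>3\<^esup>" and mono: "f ` [H]\<^bsup>2\<^esup> \<subseteq> {i}"
      using partn_lstE[OF ramsey] by (metis length_replicate nth_replicate)
    then obtain x y z where H: "H = {x, y, z}" "x < y" "y < z" "z < N"
      by (auto simp: ordered_nsets_3_eq)
    then have "{x, y} \<in> [H]\<^bsup>2\<^esup>" "{y, z} \<in> [H]\<^bsup>2\<^esup>" "{x, z} \<in> [H]\<^bsup>2\<^esup>"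
      by auto
    then have "f {x, y} = i" "f {y, z} = i" "f {x, z} = i"
      using mono by blast+
    then have "colour (y - x) = i" "colour (z - y) = i" "colour (z - x) = i"
      using H by (simp_all add: f_def)
    moreover have "y - x \<in> {1..p}" "z - y \<in> {1..p}" "z - x \<in> {1..p}"
      using H \<open>\<not> p < N\<close> by auto
    ultimately have "y - x \<in> P i" "z - y \<in> P i" "z - x \<in> P i"
      using colour by metis+
    moreover have "(y - x) + (z - y) = z - x" using H by simp
    ultimately show False using free \<open>i < n\<close> unfolding sum_free_def by metis
  qed
  then show ?thesis by blast
qed

lemma schur_partitionable_schur_number: "schur_partitionable n (schur_number n)"
  using schur_partitionable_bounded[of n] schur_partitionable_0
  unfolding schur_number_def by (metis GreatestI_ex_nat less_imp_le)

lemma le_schur_number: "schur_partitionable n p \<Longrightarrow> p \<le> schur_number n"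
  using schur_partitionable_bounded[of n]
  unfolding schur_number_def by (metis Greatest_le_nat less_imp_le)

lemma quotients_add_if_no_carry:
  fixes m L :: nat
  assumes "L < m" "ea \<le> L" "eb \<le> L" "ec \<le> L" "ec \<noteq> ea + eb + (m - L)"
    and "(m * qa + ea) + (m * qb + eb) = (m * qc + ec) + L"
  shows "qc = qa + qb"
proof -
  define d where "d = int qc - int qa - int qb"
  have md: "int m * d = int ea + int eb - int ec - int L"
    using arg_cong[OF assms(6), of int] unfolding d_def by (simp add: algebra_simps)
  have "int m * d < int m * 1" "int m * (-2) < int m * d"
    using md assms(1-4) by linarith+
  then have "d < 1" "-2 < d"
    by (meson mult_left_less_imp_less of_nat_0_le_iff)+
  moreover have "d \<noteq> -1"
    using md assms(1,5) by auto
  ultimately show ?thesis unfolding d_def by linarith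
qed

lemma mod_add_shifted:
  fixes m L :: nat
  assumes "L \<le> m"
  shows "(a + b + L) mod m = ((a + L) mod m + (b + L) mod m + (m - L)) mod m"
proof -
  have "((a + L) mod m + (b + L) mod m + (m - L)) mod m = ((a + L) + (b + L) + (m - L)) mod m"
    by (metis mod_add_eq mod_add_left_eq)
  also have "\<dots> = (a + b + L + m) mod m" using assms by (simp add: algebra_simps)
  finally show ?thesis unfolding mod_add_self2 by (rule sym)
qed

lemma sum_free_shifted_residues:
  fixes m L :: nat
  assumes "L \<le> m" and free: "\<forall>a\<in>C. \<forall>b\<in>C. (a + b + (m - L)) mod m \<notin> C"
  shows "sum_free {x. (x + L) mod m \<in> C}" (is "sum_free ?S")
  unfolding sum_free_def
proof (intro ballI notI)
  fix a b assume "a \<in> ?S" "b \<in> ?S" "a + b \<in> ?S"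
  then show False using free mod_add_shifted[OF \<open>L \<le> m\<close>, of a b] by simp
qed

lemma sum_free_inherited_residues:
  fixes m L :: nat
  assumes "L < m" and window: "\<forall>e\<in>E. e \<le> L" and no_carry: "\<forall>a\<in>E. \<forall>b\<in>E. a + b + (m - L) \<notin> E"
    and "sum_free P"
  shows "sum_free {x. (x + L) mod m \<in> E \<and> (x + L) div m \<in> P}" (is "sum_free ?S")
  unfolding sum_free_def
proof (intro ballI notI)
  fix a b assume "a \<in> ?S" "b \<in> ?S" "a + b \<in> ?S"
  then have E: "(a + L) mod m \<in> E" "(b + L) mod m \<in> E" "(a + b + L) mod m \<in> E"
    and P: "(a + L) div m \<in> P" "(b + L) div m \<in> P" "(a + b + L) div m \<in> P"
    by simp_all
  have carry: "(a + b + L) mod m \<noteq> (a + L) mod m + (b + L) mod m + (m - L)"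
    using no_carry E by metis
  have sum: "(m * ((a + L) div m) + (a + L) mod m) + (m * ((b + L) div m) + (b + L) mod m)
      = (m * ((a + b + L) div m) + (a + b + L) mod m) + L"
    by simp
  have "(a + b + L) div m = (a + L) div m + (b + L) div m"
    by (rule quotients_add_if_no_carry[OF \<open>L < m\<close> _ _ _ carry sum]) (use window E in auto)
  then show False using \<open>sum_free P\<close> P unfolding sum_free_def by metis
qed

lemma inherited_quotient_range:
  fixes m L :: nat
  assumes "L < m" "(x + L) mod m \<le> L" "x \<in> {1..m * p + (m - L - 1)}"
  shows "(x + L) div m \<in> {1..p}"
proof -
  have "(x + L) div m \<noteq> 0" using assms by (auto simp: div_eq_0_iff)
  have "m * ((x + L) div m) \<le> x + L" by (simp add: times_div_less_eq_dividend)
  also have "x + L < m * (p + 1)" using assms(1,3) by simp linarith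
  finally have "(x + L) div m < p + 1" by (rule mult_left_less_imp_less) simp
  with \<open>(x + L) div m \<noteq> 0\<close> show ?thesis by simp
qed

text \<open>Residues \<open>e\<close> are those of \<open>x + L\<close>, so that \<open>x + x' = x''\<close> reads
  \<open>e + e' + (m - L) \<equiv> e'' (mod m)\<close>; \<open>E\<close> is the inherited class and \<open>N 0, ..., N (k - 1)\<close>
  are the new ones.\<close>
definition schur_template :: "nat \<Rightarrow> nat \<Rightarrow> nat set \<Rightarrow> (nat \<Rightarrow> nat set) \<Rightarrow> nat \<Rightarrow> bool" where
  "schur_template m L E N k \<longleftrightarrow>
     L < m \<and>
     (\<forall>e<m. e \<in> E \<or> (\<exists>j<k. e \<in> N j)) \<and>
     (\<forall>e\<in>E. e \<le> L) \<and>
     (\<forall>a\<in>E. \<forall>b\<in>E. a + b + (m - L) \<notin> E) \<and>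
     (\<forall>j<k. \<forall>a\<in>N j. \<forall>b\<in>N j. (a + b + (m - L)) mod m \<notin> N j)"

lemma schur_partitionable_template_extend:
  assumes T: "schur_template m L E N k" and "schur_partitionable n p"
  shows "schur_partitionable (n + k) (m * p + (m - L - 1))"
proof -
  from assms(2) obtain P where P_cover: "(\<Union>i<n. P i) = {1..p}" and P_free: "\<forall>i<n. sum_free (P i)"
    unfolding schur_partitionable_def by blast
  from T have "L < m" and cover: "\<forall>e<m. e \<in> E \<or> (\<exists>j<k. e \<in> N j)"
    and window: "\<forall>e\<in>E. e \<le> L" and no_carry: "\<forall>a\<in>E. \<forall>b\<in>E. a + b + (m - L) \<notin> E"
    and N_free: "\<forall>j<k. \<forall>a\<in>N j. \<forall>b\<in>N j. (a + b + (m - L)) mod m \<notin> N j"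
    unfolding schur_template_def by blast+
  define A where "A i = (if i < n then {x. (x + L) mod m \<in> E \<and> (x + L) div m \<in> P i}
    else {x. (x + L) mod m \<in> N (i - n)})" for i
  show ?thesis
  proof (rule schur_partitionable_if_covered)
    show "{1..m * p + (m - L - 1)} \<subseteq> (\<Union>i<n + k. A i)"
    proof
      fix x assume x: "x \<in> {1..m * p + (m - L - 1)}"
      have "(x + L) mod m < m" using \<open>L < m\<close> by simp
      then consider "(x + L) mod m \<in> E" | j where "j < k" "(x + L) mod m \<in> N j"
        using cover by blast
      then show "x \<in> (\<Union>i<n + k. A i)"
      proof cases
        case 1
        then have "(x + L) div m \<in> (\<Union>i<n. P i)"
          using inherited_quotient_range[OF \<open>L < m\<close> _ x] window P_cover by simp
        then obtain i where "i < n" "(x + L) div m \<in> P i" by blast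
        then have "x \<in> A i" using 1 unfolding A_def by simp
        then show ?thesis using \<open>i < n\<close> by (intro UN_I[of i]) auto
      next
        case 2
        then have "x \<in> A (n + j)" unfolding A_def by simp
        then show ?thesis using \<open>j < k\<close> by (intro UN_I[of "n + j"]) auto
      qed
    qed
  next
    fix i assume "i < n + k"
    show "sum_free (A i)"
    proof (cases "i < n")
      case True
      then show ?thesis
        unfolding A_def using sum_free_inherited_residues[OF \<open>L < m\<close> window no_carry] P_free by simp
    next
      case False
      then show ?thesis
        unfolding A_def using sum_free_shifted_residues[of L m] \<open>L < m\<close> N_free \<open>i < n + k\<close> by simp
    qed
  qed
qed

definition template111_inherited :: "nat list" where
  "template111_inherited = [0, 6, 9, 12, 13, 15, 16, 18, 19, 20, 21, 22, 24, 25, 26, 27, 28, 29,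
     30, 31, 32, 33, 34, 35, 36, 37, 38, 39, 40, 41, 42, 43, 45, 46, 47, 48, 49, 51, 52, 54, 55,
     58, 61, 67]"

definition template111_classes :: "nat list list" where
  "template111_classes =
     [[3, 4, 11, 56, 63, 64, 70, 71, 76, 78, 84, 86, 92, 94, 100, 102, 107, 108],
      [5, 14, 17, 23, 44, 53, 62, 80, 83, 87, 89, 91, 95, 98],
      [2, 7, 60, 65, 69, 73, 74, 77, 82, 85, 93, 96, 101, 104, 105, 109],
      [1, 8, 10, 50, 57, 59, 66, 68, 72, 75, 79, 81, 88, 90, 97, 99, 103, 106, 110]]"

lemma schur_template_111:
  "schur_template 111 67 (set template111_inherited) (\<lambda>j. set (template111_classes ! j)) 4"
  unfolding schur_template_def
proof (intro conjI)
  show "\<forall>e<111. e \<in> set template111_inherited \<or> (\<exists>j<4. e \<in> set (template111_classes ! j))"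
    unfolding forall_less_iff exists_less_iff
    by (simp add: lessThan_nat_numeral template111_inherited_def template111_classes_def)
  show "\<forall>e\<in>set template111_inherited. e \<le> 67"
    "\<forall>a\<in>set template111_inherited. \<forall>b\<in>set template111_inherited.
       a + b + (111 - 67) \<notin> set template111_inherited"
    by (simp_all add: template111_inherited_def)
  show "\<forall>j<4. \<forall>a\<in>set (template111_classes ! j). \<forall>b\<in>set (template111_classes ! j).
      (a + b + (111 - 67)) mod 111 \<notin> set (template111_classes ! j)"
    by code_simp
qed simp

theorem mainTheorem4:
  fixes n :: nat
  assumes "n \<ge> 1"
  shows "schur_number (n + 4) \<ge> 111 * schur_number n + 43"
proof -
  have "schur_partitionable (n + 4) (111 * schur_number n + (111 - 67 - 1))"
    using schur_template_111 schur_partitionable_schur_number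
    by (rule schur_partitionable_template_extend)
  then show ?thesis by (simp add: le_schur_number)
qed

end
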